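(* Let $\Lambda$ be a finite connected graph with $N$ sites, $\mathcal{H}=\bigotimes_{x\in\Lambda}\mathfrak{h}_x$ with each $\mathfrak{h}_x$ a copy of a finite-dimensional Hilbert space $\mathfrak{h}$, $\mathfrak{h}^s\subset\mathfrak{h}$ a subspace, and $\mathrm{Sym}^N(\mathfrak{h}^s)\subset\mathcal{H}$ the totally symmetric subspace of $\bigotimes_{x}\mathfrak{h}^s_x$. If a linear operator $\hat{H}$ on $\mathcal{H}$ leaves $\mathrm{Sym}^N(\mathfrak{h}^s)$ invariant, then $\hat{H}=\hat{H}_A+\hat{H}_Z$, where $\hat{H}_Z$ is totally symmetric (i.e. $\hat{\sigma}\hat{H}_Z\hat{\sigma}^{-1}=\hat{H}_Z$ for all site permutations $\sigma\in\mathfrak{S}_N$), $\hat{H}_A$ annihilates $\mathrm{Sym}^N(\mathfrak{h}^s)$, and $\hat{H}_A$ can be written as $$\hat{H}_A=\sum_{x\in\Lambda}\hat{h}^{(1)}_{[x]}\hat{P}_x+\sum_{\langle x,y\rangle}\hat{h}^{(2)}_{[xy]}\hat{P}_{xy},$$ where the second sum runs over nearest-neighbour pairs, each $\hat{P}_x$ (resp. $\hat{P}_{xy}$) is an orthogonal projector acting non-trivially only on site $x$ (resp. on sites $x,y$) and annihilating $\mathrm{Sym}^N(\mathfrak{h}^s)$, and $\hat{h}^{(1)}_{[x]},\hat{h}^{(2)}_{[xy]}$ are some (not necessarily local) operators on $\mathcal{H}$. In particular, vectors of $\mathrm{Sym}^N(\mathfrak{h}^s)$ that are eigenvectors of $\hat{H}_Z$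 are eigenvectors of $\hat{H}$ with the same eigenvalues.
   Context: For $\sigma\in\mathfrak{S}_N$, $\hat{\sigma}$ is the operator on $\mathcal{H}$ permuting the tensor factors: $\hat{\sigma}\bigotimes_x|e_x\rangle_x=\bigotimes_x|e_{\sigma(x)}\rangle_x$. $\mathrm{Sym}^N(\mathfrak{h}^s)=\{v\in\bigotimes_x\mathfrak{h}^s_x:\hat{\sigma}v=v\ \forall\sigma\}$. An operator annihilates a subspace if it maps all its vectors to $0$. *)

theory Defs
  imports "HOL-Analysis.Analysis"
begin

text \<open>Sites form a finite type 'v (so N = CARD('v)); the one-site Hilbert space
  is complex^'d (any finite-dimensional space, with orthonormal basis indexed by 'd).
  The total space H = tensor over sites of the one-site spaces is complex^('v => 'd),
  with orthonormal product basis e_c indexed by configurations c :: 'v => 'd.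
  Operators on H are matrices complex^('v=>'d)^('v=>'d) (row index first).\<close>

type_synonym ('v, 'd) state = "complex ^ ('v \<Rightarrow> 'd)"
type_synonym ('v, 'd) oper = "complex ^ ('v \<Rightarrow> 'd) ^ ('v \<Rightarrow> 'd)"

definition csubspace :: "(complex ^ 'n) set \<Rightarrow> bool" where
  "csubspace S \<longleftrightarrow> 0 \<in> S \<and> (\<forall>x\<in>S. \<forall>y\<in>S. x + y \<in> S) \<and> (\<forall>c. \<forall>x\<in>S. c *s x \<in> S)"

definition cspan :: "(complex ^ 'n) set \<Rightarrow> (complex ^ 'n) set" where
  "cspan A = {\<Sum>a\<in>T. g a *s a | T g. finite T \<and> T \<subseteq> A}"

text \<open>Product vector: tensor over all sites x of f x.\<close>
definition tensor_vec :: "('v::finite \<Rightarrow> complex ^ 'd::finite) \<Rightarrow> ('v, 'd) state" where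
  "tensor_vec f = (\<chi> c. \<Prod>x\<in>UNIV. f x $ c x)"

definition tensor_sub :: "(complex ^ 'd::finite) set \<Rightarrow> ('v::finite, 'd) state set" where
  "tensor_sub S = cspan {tensor_vec f | f. \<forall>x. f x \<in> S}"

text \<open>Site permutation operator: sigma-hat e_c = e_(c o sigma), i.e.
  sigma-hat (tensor_x |e_(c x)>_x) = tensor_x |e_(c (sigma x))>_x.\<close>
definition perm_op :: "('v::finite \<Rightarrow> 'v) \<Rightarrow> ('v, 'd::finite) oper" where
  "perm_op \<sigma> = (\<chi> c' c. if c' = c \<circ> \<sigma> then 1 else 0)"

definition Sym :: "(complex ^ 'd::finite) set \<Rightarrow> ('v::finite, 'd) state set" where
  "Sym S = {v \<in> tensor_sub S. \<forall>\<sigma>. \<sigma> permutes (UNIV::'v set) \<longrightarrow> perm_op \<sigma> *v v = v}"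

definition annihilates :: "('v::finite, 'd::finite) oper \<Rightarrow> ('v, 'd) state set \<Rightarrow> bool" where
  "annihilates M V \<longleftrightarrow> (\<forall>v\<in>V. M *v v = 0)"

definition totally_symmetric :: "('v::finite, 'd::finite) oper \<Rightarrow> bool" where
  "totally_symmetric M \<longleftrightarrow>
     (\<forall>\<sigma>. \<sigma> permutes (UNIV::'v set) \<longrightarrow> perm_op \<sigma> ** M ** matrix_inv (perm_op \<sigma>) = M)"

definition orth_proj :: "complex ^ 'n::finite ^ 'n \<Rightarrow> bool" where
  "orth_proj M \<longleftrightarrow> M ** M = M \<and> map_matrix cnj (transpose M) = M"

text \<open>M acts non-trivially only on the sites in X: M = B tensor Id_(complement of X).\<close>
definition acts_only_on :: "'v set \<Rightarrow> ('v::finite, 'd::finite) oper \<Rightarrow> bool" where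
  "acts_only_on X M \<longleftrightarrow> (\<exists>B. \<forall>c c'. M $ c $ c' =
      (if \<forall>y. y \<notin> X \<longrightarrow> c y = c' y then B (restrict c X) (restrict c' X) else 0))"

end

theory Submission
  imports Defs "HOL-Combinatorics.Permutations"
begin

text \<open>Let p be the orthogonal projector of the one-site space onto S, and let
  P = Y (p \<otimes> ... \<otimes> p) Y, where Y is the average of the site permutations. Then P fixes
  Sym(S) and maps every vector into it, so invariance gives H P = P H P. Hence H_Z = P H P is
  totally symmetric and agrees with H on Sym(S), and H_A = H - H_Z = H (1 - P). It remains to
  put 1 - P into the left ideal generated by the one-site projectors Q_x = 1 - p_x and the edge
  antisymmetrizers (1 - \<sigma>_xy)/2. For 1 - p \<otimes> ... \<otimes> p this is a telescoping sum of terms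
  (p_x1 ... p_xk) Q_x. For 1 - Y it suffices to treat 1 - \<sigma> for each permutation \<sigma>; the
  identity 1 - \<sigma>\<rho> = (1 - \<sigma>) + \<sigma> (1 - \<rho>) reduces this to transpositions, and in a connected
  graph every transposition is a product of transpositions along edges.\<close>

lemma matrix_add_rdistrib: "(A + B) ** C = A ** C + B ** C"
  by (simp add: vec_eq_iff matrix_matrix_mult_def sum.distrib distrib_right)

lemma matrix_diff_ldistrib: "(A :: 'a::ring_1 ^ 'n ^ 'm) ** (B - C) = A ** B - A ** C"
  by (simp add: vec_eq_iff matrix_matrix_mult_def sum_subtractf right_diff_distrib)

lemma matrix_mul_sum: "A ** sum f I = (\<Sum>i\<in>I. A ** f i)"
  by (induct I rule: infinite_finite_induct) (auto simp: matrix_add_ldistrib)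

lemma sum_matrix_mul: "sum f I ** A = (\<Sum>i\<in>I. f i ** A)"
  by (induct I rule: infinite_finite_induct) (auto simp: matrix_add_rdistrib)

lemma sum_matrix_mult_vec: "sum f I *v v = (\<Sum>i\<in>I. f i *v v)"
  by (induct I rule: infinite_finite_induct) (auto simp: matrix_vector_mult_add_rdistrib)

lemma scaleR_matrix_mult_vec: "(r *\<^sub>R A) *v v = r *\<^sub>R (A *v v)"
  for A :: "'a::real_algebra_1 ^ 'n ^ 'm"
  by (simp add: vec_eq_iff matrix_vector_mult_def scaleR_sum_right)

lemma matrix_mult_vec_scaleR: "A *v (r *\<^sub>R v) = r *\<^sub>R (A *v v)"
  for A :: "'a::real_algebra_1 ^ 'n ^ 'm"
  by (simp add: vec_eq_iff matrix_vector_mult_def scaleR_sum_right)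

lemma scaleR_eq_of_real_scale: "r *\<^sub>R (x :: complex ^ 'n) = complex_of_real r *s x"
  by (simp add: vec_eq_iff scaleR_conv_of_real[where 'a=complex])

section \<open>Orthogonal projection onto a complex subspace\<close>

definition cinner :: "complex ^ 'n::finite \<Rightarrow> complex ^ 'n \<Rightarrow> complex" where
  "cinner u w = (\<Sum>i\<in>UNIV. u $ i * cnj (w $ i))"

lemma cinner_diff_left: "cinner (a - b) w = cinner a w - cinner b w"
  by (simp add: cinner_def algebra_simps sum_subtractf)

lemma cinner_scale_left: "cinner (c *s a) w = c * cinner a w"
  by (simp add: cinner_def sum_distrib_left mult.assoc)

lemma cinner_scale_right: "cinner a (c *s w) = cnj c * cinner a w"
  by (simp add: cinner_def sum_distrib_left algebra_simps)

lemma cinner_sum_left: "cinner (\<Sum>j\<in>J. f j) w = (\<Sum>j\<in>J. cinner (f j) w)"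
  by (simp add: cinner_def sum_distrib_right sum.swap[of _ UNIV J])

lemma cinner_commute: "cinner a b = cnj (cinner b a)"
  by (simp add: cinner_def mult.commute)

lemma cinner_axis_right: "cinner u (axis i 1) = u $ i"
  by (simp add: cinner_def axis_def if_distrib cong: if_cong)

lemma inner_eq_Re_cinner: "inner u w = Re (cinner u w)"
  by (simp add: inner_vec_def cinner_def inner_complex_def Re_sum)

lemma cinner_self_eq_0: "cinner d d = 0 \<Longrightarrow> d = 0"
proof -
  assume "cinner d d = 0"
  moreover have "cinner d d = of_real (\<Sum>i\<in>UNIV. (cmod (d $ i))\<^sup>2)"
    by (simp only: cinner_def of_real_sum complex_norm_square)
  ultimately have "(\<Sum>i\<in>UNIV. (cmod (d $ i))\<^sup>2) = 0"
    by (metis of_real_eq_0_iff)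
  then have "\<forall>i\<in>UNIV. (cmod (d $ i))\<^sup>2 = 0"
    by (subst sum_nonneg_eq_0_iff[symmetric]) auto
  then show "d = 0" by (simp add: vec_eq_iff)
qed

lemma csubspace_iff_vec_subspace: "csubspace S \<longleftrightarrow> vec.subspace S"
  by (auto simp: csubspace_def vec.subspace_def)

lemma csubspace_imp_subspace: "csubspace S \<Longrightarrow> subspace S"
  unfolding subspace_def csubspace_def scaleR_eq_of_real_scale by blast

lemma orthogonal_projection_exists:
  assumes S: "csubspace S"
  shows "\<exists>y\<in>S. \<forall>w\<in>S. cinner (x - y) w = 0"
proof -
  have span_S: "span S = S" using csubspace_imp_subspace[OF S] by (simp add: span_eq_iff)
  obtain y z where "y \<in> span S" and z: "\<And>w. w \<in> span S \<Longrightarrow> orthogonal z w" and "x = y + z"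
    using orthogonal_subspace_decomp_exists[of S x] by blast
  \<comment> \<open>real orthogonality to both w and i w gives complex orthogonality to w\<close>
  have z_orth: "cinner z w = 0" if w: "w \<in> S" for w
  proof -
    have "\<i> *s w \<in> S" using S w unfolding csubspace_def by blast
    then have "Re (cinner z (\<i> *s w)) = 0" using z span_S by (metis inner_eq_Re_cinner orthogonal_def)
    then have "Im (cinner z w) = 0" by (simp add: cinner_scale_right)
    moreover have "Re (cinner z w) = 0" using z span_S w by (metis inner_eq_Re_cinner orthogonal_def)
    ultimately show ?thesis by (simp add: complex_eq_iff)
  qed
  show ?thesis
  proof
    show "y \<in> S" using \<open>y \<in> span S\<close> span_S by simp
    show "\<forall>w\<in>S. cinner (x - y) w = 0" using z_orth \<open>x = y + z\<close> by simp
  qed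
qed

definition cproj :: "(complex ^ 'n::finite) set \<Rightarrow> complex ^ 'n \<Rightarrow> complex ^ 'n" where
  "cproj S x = (SOME y. y \<in> S \<and> (\<forall>w\<in>S. cinner (x - y) w = 0))"

lemma
  assumes "csubspace S"
  shows cproj_in: "cproj S x \<in> S"
    and cproj_orthogonal: "w \<in> S \<Longrightarrow> cinner (x - cproj S x) w = 0"
  using someI_ex[OF orthogonal_projection_exists[OF assms, of x, unfolded Bex_def]]
  by (auto simp: cproj_def)

lemma cproj_unique:
  assumes S: "csubspace S" and "y \<in> S" and orth: "\<And>w. w \<in> S \<Longrightarrow> cinner (x - y) w = 0"
  shows "cproj S x = y"
proof -
  have diff_in_S: "cproj S x - y \<in> S"
    using S \<open>y \<in> S\<close> cproj_in[OF S] by (simp add: csubspace_iff_vec_subspace vec.subspace_diff)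
  have "cinner (cproj S x - y) (cproj S x - y)
      = cinner (x - y) (cproj S x - y) - cinner (x - cproj S x) (cproj S x - y)"
    by (simp add: cinner_diff_left[symmetric])
  also have "\<dots> = 0" using orth cproj_orthogonal[OF S] diff_in_S by simp
  finally show ?thesis using cinner_self_eq_0 by fastforce
qed

definition proj_matrix :: "(complex ^ 'n::finite) set \<Rightarrow> complex ^ 'n ^ 'n" where
  "proj_matrix S = (\<chi> i j. cproj S (axis j 1) $ i)"

lemma proj_matrix_mult_vec:
  assumes S: "csubspace S"
  shows "proj_matrix S *v v = cproj S v"
proof -
  have "proj_matrix S *v v = (\<Sum>j\<in>UNIV. v $ j *s cproj S (axis j 1))"
    by (simp add: vec_eq_iff proj_matrix_def matrix_vector_mult_def mult.commute sum_component)
  also have "\<dots> = cproj S v"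
  proof (rule cproj_unique[OF S, symmetric])
    show "(\<Sum>j\<in>UNIV. v $ j *s cproj S (axis j 1)) \<in> S"
      using S cproj_in[OF S] by (simp add: csubspace_iff_vec_subspace vec.subspace_sum vec.subspace_scale)
    fix w assume w: "w \<in> S"
    have eq: "v - (\<Sum>j\<in>UNIV. v $ j *s cproj S (axis j 1))
        = (\<Sum>j\<in>UNIV. v $ j *s (axis j 1 - cproj S (axis j 1)))"
      by (subst (1) basis_expansion[symmetric]) (simp add: sum_subtractf vector_ssub_ldistrib)
    have "cinner (v $ j *s (axis j 1 - cproj S (axis j 1))) w = 0" for j
      by (simp only: cinner_scale_left cproj_orthogonal[OF S w] mult_zero_right)
    then show "cinner (v - (\<Sum>j\<in>UNIV. v $ j *s cproj S (axis j 1))) w = 0"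
      unfolding eq cinner_sum_left by (simp only: sum.neutral_const sum.neutral)
  qed
  finally show ?thesis .
qed

lemma proj_matrix_mult_vec_in: "csubspace S \<Longrightarrow> proj_matrix S *v v \<in> S"
  by (simp add: proj_matrix_mult_vec cproj_in)

lemma proj_matrix_fixes: "csubspace S \<Longrightarrow> v \<in> S \<Longrightarrow> proj_matrix S *v v = v"
  using cproj_unique[of S v v] by (simp add: proj_matrix_mult_vec cinner_def)

lemma orth_proj_proj_matrix:
  assumes S: "csubspace S"
  shows "orth_proj (proj_matrix S)"
proof -
  let ?p = "\<lambda>i. cproj S (axis i 1)"
  have entry: "proj_matrix S $ i $ j = cinner (?p j) (?p i)" for i j
  proof -
    have "cinner (?p j) (axis i 1 - ?p i) = cnj (cinner (axis i 1 - ?p i) (?p j))"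
      by (rule cinner_commute)
    also have "\<dots> = 0" using cproj_orthogonal[OF S cproj_in[OF S]] by simp
    finally have "cinner (?p j) (axis i 1) = cinner (?p j) (?p i)"
      by (metis cinner_commute cinner_diff_left complex_cnj_diff eq_iff_diff_eq_0)
    then show ?thesis by (simp add: proj_matrix_def cinner_axis_right)
  qed
  have "cnj (proj_matrix S $ j $ i) = proj_matrix S $ i $ j" for i j
    unfolding entry by (rule cinner_commute[symmetric])
  then have "map_matrix cnj (transpose (proj_matrix S)) = proj_matrix S"
    by (simp add: vec_eq_iff transpose_def)
  moreover have "proj_matrix S ** proj_matrix S = proj_matrix S"
    using S by (simp add: matrix_eq matrix_vector_mul_assoc[symmetric] proj_matrix_fixes proj_matrix_mult_vec_in)
  ultimately show ?thesis by (simp add: orth_proj_def)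
qed

lemma orth_proj_one_minus:
  fixes M :: "complex ^ 'n::finite ^ 'n"
  assumes "orth_proj M"
  shows "orth_proj (mat 1 - M)"
proof -
  have "M *v (M *v v) = M *v v" for v
    using assms by (simp add: orth_proj_def matrix_vector_mul_assoc)
  then have "(mat 1 - M) ** (mat 1 - M) = mat 1 - M"
    by (simp add: matrix_eq matrix_vector_mul_assoc[symmetric] matrix_vector_mult_diff_rdistrib
        matrix_vector_mult_diff_distrib)
  moreover have "map_matrix cnj (transpose (mat 1 - M)) = mat 1 - M"
    using arg_cong[OF conjunct2[OF assms[unfolded orth_proj_def]], of "\<lambda>A. A $ i $ j" for i j]
    by (simp add: vec_eq_iff transpose_def mat_def)
  ultimately show ?thesis by (simp add: orth_proj_def)
qed

section \<open>Operators acting on a set of sites\<close>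

definition agree_off :: "'v set \<Rightarrow> ('v \<Rightarrow> 'd) \<Rightarrow> ('v \<Rightarrow> 'd) \<Rightarrow> bool" where
  "agree_off X a b \<longleftrightarrow> (\<forall>y. y \<notin> X \<longrightarrow> a y = b y)"

lemma agree_off_commute: "agree_off X a b = agree_off X b a"
  unfolding agree_off_def by auto

definition on_sites :: "'v set \<Rightarrow> complex ^ 'd ^ 'd \<Rightarrow> ('v::finite, 'd::finite) oper" where
  "on_sites X M = (\<chi> a b. if agree_off X a b then \<Prod>z\<in>X. M $ a z $ b z else 0)"

lemma acts_only_on_on_sites: "acts_only_on X (on_sites X M)"
  unfolding acts_only_on_def on_sites_def agree_off_def
  by (rule exI[of _ "\<lambda>f g. \<Prod>z\<in>X. M $ f z $ g z"]) (auto intro!: prod.cong)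

lemma on_sites_empty: "on_sites {} M = mat 1"
  by (simp add: vec_eq_iff on_sites_def agree_off_def mat_def fun_eq_iff)

lemma on_site_entry: "on_sites {x} M $ a $ b = (if agree_off {x} a b then M $ a x $ b x else 0)"
  by (simp add: on_sites_def)

lemma sum_agree_off_singleton:
  fixes F :: "('v::finite \<Rightarrow> 'd::finite) \<Rightarrow> complex"
  shows "(\<Sum>c\<in>UNIV. if agree_off {x} b c then F c else 0) = (\<Sum>d\<in>UNIV. F (b(x := d)))"
proof -
  have "{c. agree_off {x} b c} = range (\<lambda>d. b(x := d))"
    by (auto simp: agree_off_def image_iff fun_eq_iff intro: exI[of _ "_ x"])
  moreover have "inj (\<lambda>d. b(x := d))"
    by (auto simp: inj_on_def dest: fun_cong[where x = x])
  ultimately show ?thesis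
    by (simp add: sum.If_cases Int_def sum.reindex)
qed

lemma on_site_mult_vec_entry:
  "(on_sites {x} M *v v) $ a = (\<Sum>d\<in>UNIV. M $ a x $ d * v $ (a(x := d)))"
proof -
  have "(on_sites {x} M *v v) $ a = (\<Sum>c\<in>UNIV. if agree_off {x} a c then M $ a x $ c x * v $ c else 0)"
    by (auto simp: on_site_entry matrix_vector_mult_def intro!: sum.cong)
  then show ?thesis by (simp add: sum_agree_off_singleton)
qed

lemma tensor_vec_upd_entry:
  "tensor_vec (f(x := w)) $ (a(x := d)) = w $ d * (\<Prod>y\<in>UNIV - {x}. f y $ a y)"
  unfolding tensor_vec_def vec_lambda_beta
  by (subst prod.remove[of _ x]) (auto intro!: prod.cong)

lemma on_site_tensor_vec: "on_sites {x} M *v tensor_vec f = tensor_vec (f(x := M *v f x))"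
proof -
  have "(on_sites {x} M *v tensor_vec f) $ a = tensor_vec (f(x := M *v f x)) $ a" for a
  proof -
    let ?rest = "\<Prod>y\<in>UNIV - {x}. f y $ a y"
    have "(on_sites {x} M *v tensor_vec f) $ a = (\<Sum>d\<in>UNIV. M $ a x $ d * (f x $ d * ?rest))"
      using tensor_vec_upd_entry[of f x "f x"] by (simp add: on_site_mult_vec_entry)
    also have "\<dots> = (M *v f x) $ a x * ?rest"
      by (simp add: matrix_vector_mult_def sum_distrib_right mult.assoc)
    also have "\<dots> = tensor_vec (f(x := M *v f x)) $ a"
      using tensor_vec_upd_entry[of f x "M *v f x" a "a x"] by simp
    finally show ?thesis .
  qed
  then show ?thesis by (simp add: vec_eq_iff)
qed

lemma on_site_mult: "on_sites {x} M ** on_sites {x} M' = on_sites {x} (M ** M')"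
proof -
  have "(on_sites {x} M ** on_sites {x} M') $ a $ b = on_sites {x} (M ** M') $ a $ b" for a b
  proof -
    have agree_upd: "agree_off {x} (a(x := d)) b = agree_off {x} a b" for d
      by (auto simp: agree_off_def)
    have "(on_sites {x} M ** on_sites {x} M') $ a $ b
        = (\<Sum>c\<in>UNIV. if agree_off {x} a c then M $ a x $ c x * on_sites {x} M' $ c $ b else 0)"
      by (auto simp: matrix_matrix_mult_def on_site_entry intro!: sum.cong)
    also have "\<dots> = (\<Sum>d\<in>UNIV. M $ a x $ d * (if agree_off {x} a b then M' $ d $ b x else 0))"
      by (simp add: sum_agree_off_singleton on_site_entry agree_upd cong: if_cong)
    finally show ?thesis
      by (simp add: on_site_entry matrix_matrix_mult_def if_distrib cong: if_cong)
  qed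
  then show ?thesis by (simp add: vec_eq_iff)
qed

lemma on_sites_adjoint:
  "map_matrix cnj (transpose (on_sites X M)) = on_sites X (map_matrix cnj (transpose M))"
  by (simp add: vec_eq_iff on_sites_def transpose_def agree_off_commute)

lemma on_site_one_minus: "on_sites {x} (mat 1 - M) = mat 1 - on_sites {x} M"
proof -
  have "a = b \<longleftrightarrow> agree_off {x} a b \<and> a x = b x" for a b :: "'a \<Rightarrow> 'b"
    unfolding agree_off_def by (metis singletonD ext)
  then show ?thesis by (simp add: vec_eq_iff on_sites_def mat_def)
qed

lemma orth_proj_on_site: "orth_proj M \<Longrightarrow> orth_proj (on_sites {x} M)"
  by (simp add: orth_proj_def on_site_mult on_sites_adjoint)

lemma on_sites_insert:
  assumes "x \<notin> X"
  shows "on_sites (insert x X) M = on_sites X M ** on_sites {x} M"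
proof -
  have "(on_sites X M ** on_sites {x} M) $ a $ b = on_sites (insert x X) M $ a $ b" for a b
  proof -
    have agree_upd: "agree_off X a (b(x := d)) \<longleftrightarrow> d = a x \<and> agree_off (insert x X) a b" for d
      using assms by (auto simp: agree_off_def)
    have prod_upd: "(\<Prod>z\<in>X. M $ a z $ (b(x := d)) z) = (\<Prod>z\<in>X. M $ a z $ b z)" for d
      using assms by (intro prod.cong) auto
    have entry_upd: "on_sites X M $ a $ (b(x := d))
        = (if d = a x \<and> agree_off (insert x X) a b then \<Prod>z\<in>X. M $ a z $ b z else 0)" for d
      unfolding on_sites_def vec_lambda_beta agree_upd prod_upd ..
    have "(on_sites X M ** on_sites {x} M) $ a $ b
        = (\<Sum>c\<in>UNIV. if agree_off {x} b c then on_sites X M $ a $ c * M $ c x $ b x else 0)"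
      by (auto simp: matrix_matrix_mult_def on_site_entry agree_off_commute intro!: sum.cong)
    also have "\<dots> = (\<Sum>d\<in>UNIV. on_sites X M $ a $ (b(x := d)) * M $ d $ b x)"
      by (simp add: sum_agree_off_singleton)
    also have "\<dots> = (\<Sum>d\<in>UNIV. if d = a x then
        (if agree_off (insert x X) a b then (\<Prod>z\<in>X. M $ a z $ b z) * M $ a x $ b x else 0) else 0)"
      by (intro sum.cong) (simp_all add: entry_upd)
    finally show ?thesis
      using assms by (simp add: on_sites_def mult.commute)
  qed
  then show ?thesis by (simp add: vec_eq_iff)
qed

lemma on_sites_tensor_vec:
  "finite X \<Longrightarrow> on_sites X M *v tensor_vec f = tensor_vec (\<lambda>z. if z \<in> X then M *v f z else f z)"
proof (induction X arbitrary: f rule: finite_induct)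
  case empty
  then show ?case by (simp add: on_sites_empty)
next
  case (insert x X)
  have "on_sites (insert x X) M *v tensor_vec f = on_sites X M *v (on_sites {x} M *v tensor_vec f)"
    by (simp add: on_sites_insert[OF insert.hyps(2)] matrix_vector_mul_assoc)
  also have "\<dots> = on_sites X M *v tensor_vec (f(x := M *v f x))"
    by (simp add: on_site_tensor_vec)
  also have "\<dots> = tensor_vec (\<lambda>z. if z \<in> X then M *v (f(x := M *v f x)) z else (f(x := M *v f x)) z)"
    by (rule insert.IH)
  also have "(\<lambda>z. if z \<in> X then M *v (f(x := M *v f x)) z else (f(x := M *v f x)) z)
      = (\<lambda>z. if z \<in> insert x X then M *v f z else f z)"
    using insert.hyps by (auto simp: fun_eq_iff)
  finally show ?case .
qed

lemma acts_only_on_diff: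
  "acts_only_on X A \<Longrightarrow> acts_only_on X B \<Longrightarrow> acts_only_on X (A - B)"
  unfolding acts_only_on_def
  by (elim exE, rule exI[of _ "\<lambda>f g. _ f g - _ f g"]) auto

lemma acts_only_on_scaleR: "acts_only_on X A \<Longrightarrow> acts_only_on X (r *\<^sub>R A)"
  unfolding acts_only_on_def
  by (elim exE, rule exI[of _ "\<lambda>f g. r *\<^sub>R _ f g"]) auto

section \<open>Site permutations\<close>

lemma perm_op_mult: "perm_op \<sigma> ** perm_op \<rho> = (perm_op (\<rho> \<circ> \<sigma>) :: ('v::finite, 'd::finite) oper)"
proof -
  have "(perm_op \<sigma> ** perm_op \<rho> :: ('v, 'd) oper) $ a $ b = perm_op (\<rho> \<circ> \<sigma>) $ a $ b" for a b
  proof -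
    have "(perm_op \<sigma> ** perm_op \<rho> :: ('v, 'd) oper) $ a $ b
        = (\<Sum>c\<in>UNIV. (if a = c \<circ> \<sigma> then 1 else 0) * (if c = b \<circ> \<rho> then 1 else 0))"
      by (simp add: matrix_matrix_mult_def perm_op_def)
    also have "\<dots> = (\<Sum>c\<in>UNIV. if c = b \<circ> \<rho> then (if a = c \<circ> \<sigma> then 1 else 0) else 0)"
      by (rule sum.cong) auto
    also have "\<dots> = (if a = b \<circ> \<rho> \<circ> \<sigma> then 1 else 0)"
      by (simp add: sum.delta')
    finally show ?thesis by (simp add: perm_op_def o_assoc)
  qed
  then show ?thesis by (simp add: vec_eq_iff)
qed

lemma perm_op_id: "perm_op id = mat 1"
  by (simp add: vec_eq_iff perm_op_def mat_def)

lemma matrix_inv_perm_op: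
  assumes "\<sigma> permutes UNIV"
  shows "matrix_inv (perm_op \<sigma> :: ('v::finite, 'd::finite) oper) = perm_op (inv \<sigma>)"
proof -
  let ?P = "perm_op \<sigma> :: ('v, 'd) oper"
  have left: "perm_op (inv \<sigma>) ** ?P = mat 1" and right: "?P ** perm_op (inv \<sigma>) = mat 1"
    using assms by (simp_all add: perm_op_mult permutes_inv_o perm_op_id)
  then have "\<exists>A. ?P ** A = mat 1 \<and> A ** ?P = mat 1" by blast
  then have "?P ** matrix_inv ?P = mat 1 \<and> matrix_inv ?P ** ?P = mat 1"
    unfolding matrix_inv_def by (rule someI_ex)
  then have "perm_op (inv \<sigma>) ** ?P ** matrix_inv ?P = perm_op (inv \<sigma>)"
    by (simp add: matrix_mul_assoc[symmetric])
  then show ?thesis by (simp add: left)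
qed

lemma perm_op_mult_vec_entry:
  assumes "\<sigma> permutes UNIV"
  shows "(perm_op \<sigma> *v v) $ a = v $ (a \<circ> inv \<sigma>)"
proof -
  have "a = c \<circ> \<sigma> \<longleftrightarrow> c = a \<circ> inv \<sigma>" for c
    using assms by (auto simp: fun_eq_iff permutes_inverses)
  then show ?thesis
    by (simp add: matrix_vector_mult_def perm_op_def if_distrib if_distribR cong: if_cong)
qed

lemma perm_op_tensor_vec:
  assumes "\<sigma> permutes UNIV"
  shows "perm_op \<sigma> *v tensor_vec f = tensor_vec (f \<circ> \<sigma>)"
proof -
  have "(\<Prod>x\<in>UNIV. f x $ a (inv \<sigma> x)) = (\<Prod>z\<in>UNIV. f (\<sigma> z) $ a z)" for a
    using assms by (subst prod.permute[OF assms]) (simp add: permutes_inverses)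
  then show ?thesis
    by (simp add: vec_eq_iff perm_op_mult_vec_entry[OF assms] tensor_vec_def)
qed

lemma acts_only_on_perm_op:
  assumes \<tau>: "\<tau> permutes X"
  shows "acts_only_on X (perm_op \<tau> :: ('v::finite, 'd::finite) oper)"
proof -
  have "(perm_op \<tau> :: ('v, 'd) oper) $ c $ c' = (if agree_off X c c'
      then (if restrict c X = restrict c' X \<circ> \<tau> then 1 else 0) else 0)" for c c'
  proof (cases "agree_off X c c'")
    case True
    then have "c = c' \<circ> \<tau> \<longleftrightarrow> restrict c X = restrict c' X \<circ> \<tau>"
      using \<tau> by (auto simp: fun_eq_iff agree_off_def permutes_in_image) (metis permutes_not_in)
    then show ?thesis using True by (simp add: perm_op_def)
  next
    case False
    then obtain z where "z \<notin> X" "c z \<noteq> c' z" by (auto simp: agree_off_def)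
    then have "c \<noteq> c' \<circ> \<tau>" using \<tau> by (auto simp: permutes_not_in)
    then show ?thesis using False by (simp add: perm_op_def)
  qed
  then show ?thesis unfolding acts_only_on_def agree_off_def
    by (intro exI[of _ "\<lambda>f g. if f = g \<circ> \<tau> then 1 else 0"]) blast
qed

definition antisymmetrizer :: "('v \<Rightarrow> 'v) \<Rightarrow> ('v::finite, 'd::finite) oper" where
  "antisymmetrizer \<tau> = (1/2) *\<^sub>R (mat 1 - perm_op \<tau>)"

lemma antisymmetrizer_mult_vec: "antisymmetrizer \<tau> *v v = (1/2) *\<^sub>R (v - perm_op \<tau> *v v)"
  by (simp add: antisymmetrizer_def scaleR_matrix_mult_vec matrix_vector_mult_diff_rdistrib)

lemma orth_proj_antisymmetrizer:
  assumes involution: "\<tau> \<circ> \<tau> = id"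
  shows "orth_proj (antisymmetrizer \<tau> :: ('v::finite, 'd::finite) oper)"
proof -
  let ?T = "perm_op \<tau> :: ('v, 'd) oper"
  have TT: "?T *v (?T *v v) = v" for v
    by (simp add: matrix_vector_mul_assoc perm_op_mult involution perm_op_id)
  have "antisymmetrizer \<tau> *v (antisymmetrizer \<tau> *v v) = antisymmetrizer \<tau> *v v" for v :: "('v, 'd) state"
    by (simp add: antisymmetrizer_mult_vec matrix_mult_vec_scaleR matrix_vector_mult_diff_distrib TT)
       (simp add: vec_eq_iff scaleR_conv_of_real[where 'a = complex] algebra_simps)
  then have "antisymmetrizer \<tau> ** antisymmetrizer \<tau> = (antisymmetrizer \<tau> :: ('v, 'd) oper)"
    by (simp add: matrix_eq matrix_vector_mul_assoc)
  moreover have "map_matrix cnj (transpose (antisymmetrizer \<tau>)) $ a $ b = antisymmetrizer \<tau> $ a $ b"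
    for a b :: "'v \<Rightarrow> 'd"
  proof -
    have "b = a \<circ> \<tau> \<longleftrightarrow> a = b \<circ> \<tau>"
      using involution by (auto simp: fun_eq_iff pointfree_idE)
    then show ?thesis
      by (simp add: transpose_def antisymmetrizer_def perm_op_def mat_def eq_commute[of b a] if_distrib[of cnj])
  qed
  then have "map_matrix cnj (transpose (antisymmetrizer \<tau>)) = (antisymmetrizer \<tau> :: ('v, 'd) oper)"
    by (simp add: vec_eq_iff)
  ultimately show ?thesis by (simp add: orth_proj_def)
qed

lemma acts_only_on_antisymmetrizer:
  "\<tau> permutes X \<Longrightarrow> acts_only_on X (antisymmetrizer \<tau>)"
  unfolding antisymmetrizer_def perm_op_id[symmetric]
  by (intro acts_only_on_scaleR acts_only_on_diff acts_only_on_perm_op permutes_id)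

lemma antisymmetrizer_annihilates_Sym:
  "\<tau> permutes UNIV \<Longrightarrow> annihilates (antisymmetrizer \<tau>) (Sym S)"
  by (simp add: annihilates_def antisymmetrizer_mult_vec Sym_def)

lemma tensor_sub_eq_span: "tensor_sub S = vec.span {tensor_vec f | f. \<forall>x. f x \<in> S}"
  by (simp add: tensor_sub_def cspan_def vec.span_explicit)

lemma annihilates_tensor_subI:
  assumes "\<And>f. \<forall>x. f x \<in> S \<Longrightarrow> M *v tensor_vec f = 0"
  shows "annihilates M (tensor_sub S)"
proof -
  have "tensor_sub S \<subseteq> {v. M *v v = 0}"
    unfolding tensor_sub_eq_span using assms by (intro vec.span_minimal vec.subspace_kernel) auto
  then show ?thesis by (auto simp: annihilates_def)
qed

lemma tensor_sub_fixed:
  assumes "\<And>f. \<forall>x. f x \<in> S \<Longrightarrow> M *v tensor_vec f = tensor_vec f" and "v \<in> tensor_sub S"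
  shows "M *v v = v"
proof -
  have "annihilates (M - mat 1) (tensor_sub S)"
    using assms(1) by (intro annihilates_tensor_subI) (simp add: matrix_vector_mult_diff_rdistrib)
  then show ?thesis using assms(2) by (simp add: annihilates_def matrix_vector_mult_diff_rdistrib)
qed

lemma perm_op_tensor_sub:
  assumes "\<sigma> permutes UNIV" and "u \<in> tensor_sub S"
  shows "perm_op \<sigma> *v u \<in> (tensor_sub S :: ('v::finite, 'd::finite) state set)"
proof -
  let ?T = "{tensor_vec f | f. \<forall>x. f x \<in> S} :: ('v, 'd) state set"
  have "(*v) (perm_op \<sigma>) ` ?T \<subseteq> ?T"
    using assms(1) by (auto simp: perm_op_tensor_vec)
  then have "(*v) (perm_op \<sigma>) ` tensor_sub S \<subseteq> tensor_sub S"
    unfolding tensor_sub_eq_span vec.span_image[symmetric] by (rule vec.span_mono)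
  then show ?thesis using assms(2) by blast
qed

lemma tensor_vec_eq_0: "f x = 0 \<Longrightarrow> tensor_vec f = 0"
  by (auto simp: vec_eq_iff tensor_vec_def prod_zero)

lemma axis_eq_tensor_vec: "(axis c 1 :: ('v::finite, 'd::finite) state) = tensor_vec (\<lambda>x. axis (c x) 1)"
proof -
  have "(\<Prod>x\<in>UNIV. axis (c x) 1 $ a x) = (if c = a then 1 else 0 :: complex)" for a
  proof (cases "c = a")
    case False
    then obtain x where "c x \<noteq> a x" by auto
    then show ?thesis using False by (auto simp: axis_def prod_zero)
  qed (simp add: axis_def)
  then show ?thesis by (simp add: vec_eq_iff tensor_vec_def axis_def)
qed

lemma on_sites_proj_matrix_fixes:
  assumes S: "csubspace S" and "v \<in> tensor_sub S"
  shows "on_sites UNIV (proj_matrix S) *v v = v"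
  by (rule tensor_sub_fixed[OF _ assms(2)]) (simp add: on_sites_tensor_vec proj_matrix_fixes[OF S])

lemma on_sites_proj_matrix_in_tensor_sub:
  assumes S: "csubspace S"
  shows "on_sites UNIV (proj_matrix S) *v w \<in> (tensor_sub S :: ('v::finite, 'd::finite) state set)"
proof -
  have "on_sites UNIV (proj_matrix S) *v w
      = (\<Sum>c\<in>UNIV. w $ c *s tensor_vec (\<lambda>x. proj_matrix S *v axis (c x) 1))"
    by (subst basis_expansion[symmetric])
       (simp add: vec.sum vector_scalar_commute axis_eq_tensor_vec on_sites_tensor_vec)
  also have "\<dots> \<in> tensor_sub S"
    unfolding tensor_sub_eq_span
    by (intro vec.span_sum vec.span_scale vec.span_base) (auto intro: proj_matrix_mult_vec_in[OF S])
  finally show ?thesis .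
qed

definition site_proj :: "(complex ^ 'd) set \<Rightarrow> 'v \<Rightarrow> ('v::finite, 'd::finite) oper" where
  "site_proj S x = on_sites {x} (mat 1 - proj_matrix S)"

text \<open>pair_swap e is junk unless e is a doubleton; only edges {x, y} with x \<noteq> y are ever used.\<close>

definition pair_swap :: "'v set \<Rightarrow> 'v \<Rightarrow> 'v" where
  "pair_swap e z = (if z \<in> e then THE w. w \<in> e \<and> w \<noteq> z else z)"

definition edge_proj :: "'v set \<Rightarrow> ('v::finite, 'd::finite) oper" where
  "edge_proj e = antisymmetrizer (pair_swap e)"

lemma pair_swap_doubleton: "x \<noteq> y \<Longrightarrow> pair_swap {x, y} = Transposition.transpose x y"
  by (auto simp: fun_eq_iff pair_swap_def intro!: the_equality)

lemma site_proj_properties: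
  fixes S :: "(complex ^ 'd::finite) set" and x :: "'v::finite"
  assumes S: "csubspace S"
  shows "orth_proj (site_proj S x) \<and> acts_only_on {x} (site_proj S x) \<and> annihilates (site_proj S x) (Sym S)"
proof (intro conjI)
  show "orth_proj (site_proj S x)"
    unfolding site_proj_def by (intro orth_proj_on_site orth_proj_one_minus orth_proj_proj_matrix S)
  show "acts_only_on {x} (site_proj S x)"
    unfolding site_proj_def by (rule acts_only_on_on_sites)
  have "annihilates (site_proj S x) (tensor_sub S)"
  proof (rule annihilates_tensor_subI)
    fix f :: "'v \<Rightarrow> complex ^ 'd" assume "\<forall>x. f x \<in> S"
    then have "(mat 1 - proj_matrix S) *v f x = 0"
      by (simp add: matrix_vector_mult_diff_rdistrib proj_matrix_fixes[OF S])
    then show "site_proj S x *v tensor_vec f = 0"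
      by (simp add: site_proj_def on_site_tensor_vec tensor_vec_eq_0[of _ x])
  qed
  then show "annihilates (site_proj S x) (Sym S)"
    by (simp add: annihilates_def Sym_def)
qed

lemma edge_proj_properties:
  assumes "x \<noteq> y"
  shows "orth_proj (edge_proj {x, y}) \<and> acts_only_on {x, y} (edge_proj {x, y})
    \<and> annihilates (edge_proj {x, y}) (Sym S)"
  unfolding edge_proj_def pair_swap_doubleton[OF assms]
  by (intro conjI orth_proj_antisymmetrizer acts_only_on_antisymmetrizer antisymmetrizer_annihilates_Sym
      permutes_swap_id transpose_comp_involutory) auto

definition symmetrizer :: "('v::finite, 'd::finite) oper" where
  "symmetrizer = (1 / real (card {\<sigma>::'v \<Rightarrow> 'v. \<sigma> permutes UNIV})) *\<^sub>R (\<Sum>\<sigma> | \<sigma> permutes UNIV. perm_op \<sigma>)"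

lemma card_permutations_UNIV_pos: "card {\<sigma>::'v::finite \<Rightarrow> 'v. \<sigma> permutes UNIV} > 0"
  using finite_permutations[of "UNIV :: 'v set"]
  by (auto simp: card_gt_0_iff intro!: exI[of _ id] permutes_id)

lemma sum_perm_op_comp_right:
  "\<rho> permutes UNIV \<Longrightarrow> (\<Sum>\<sigma> | \<sigma> permutes UNIV. perm_op (\<sigma> \<circ> \<rho>)) = (\<Sum>\<sigma> | \<sigma> permutes UNIV. perm_op \<sigma>)"
  by (rule sum.reindex_bij_witness[where i = "\<lambda>\<tau>. \<tau> \<circ> inv \<rho>" and j = "\<lambda>\<sigma>. \<sigma> \<circ> \<rho>"])
     (auto simp: o_assoc[symmetric] permutes_inv_o permutes_compose permutes_inv)

lemma sum_perm_op_comp_left: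
  "\<rho> permutes UNIV \<Longrightarrow> (\<Sum>\<sigma> | \<sigma> permutes UNIV. perm_op (\<rho> \<circ> \<sigma>)) = (\<Sum>\<sigma> | \<sigma> permutes UNIV. perm_op \<sigma>)"
  by (rule sum.reindex_bij_witness[where i = "\<lambda>\<tau>. inv \<rho> \<circ> \<tau>" and j = "\<lambda>\<sigma>. \<rho> \<circ> \<sigma>"])
     (auto simp: o_assoc permutes_inv_o permutes_compose permutes_inv)

lemma perm_op_mult_symmetrizer:
  assumes "\<rho> permutes UNIV"
  shows "perm_op \<rho> ** symmetrizer = (symmetrizer :: ('v::finite, 'd::finite) oper)"
proof -
  have "perm_op \<rho> ** (\<Sum>\<sigma> | \<sigma> permutes UNIV. perm_op \<sigma>)
      = (\<Sum>\<sigma> | \<sigma> permutes UNIV. perm_op \<sigma> :: ('v, 'd) oper)"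
    using assms by (simp add: matrix_mul_sum perm_op_mult sum_perm_op_comp_right)
  then show ?thesis
    by (simp only: symmetrizer_def matrix_scalar_ac scalar_matrix_assoc[symmetric])
qed

lemma symmetrizer_mult_perm_op:
  assumes "\<rho> permutes UNIV"
  shows "symmetrizer ** perm_op \<rho> = (symmetrizer :: ('v::finite, 'd::finite) oper)"
proof -
  have "(\<Sum>\<sigma> | \<sigma> permutes UNIV. perm_op \<sigma>) ** perm_op \<rho>
      = (\<Sum>\<sigma> | \<sigma> permutes UNIV. perm_op \<sigma> :: ('v, 'd) oper)"
    using assms by (simp add: sum_matrix_mul perm_op_mult sum_perm_op_comp_left)
  then show ?thesis
    by (simp only: symmetrizer_def scalar_matrix_assoc[symmetric])
qed

lemma symmetrizer_fixes:
  fixes v :: "('v::finite, 'd::finite) state"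
  assumes "\<And>\<sigma>. \<sigma> permutes UNIV \<Longrightarrow> perm_op \<sigma> *v v = v"
  shows "symmetrizer *v v = v"
  using assms card_permutations_UNIV_pos[where 'v = 'v]
  by (simp add: symmetrizer_def scaleR_matrix_mult_vec sum_matrix_mult_vec sum_constant_scaleR
      del: sum_constant) (meson permutes_id)

lemma symmetrizer_tensor_sub:
  assumes "u \<in> tensor_sub S"
  shows "symmetrizer *v u \<in> (tensor_sub S :: ('v::finite, 'd::finite) state set)"
  using assms perm_op_tensor_sub[of _ u S]
  unfolding symmetrizer_def scaleR_matrix_mult_vec sum_matrix_mult_vec scaleR_eq_of_real_scale
    tensor_sub_eq_span
  by (intro vec.span_sum vec.span_scale) auto

lemma one_minus_symmetrizer:
  "mat 1 - symmetrizer = (1 / real (card {\<sigma>::'v \<Rightarrow> 'v. \<sigma> permutes UNIV}))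
     *\<^sub>R (\<Sum>\<sigma> | \<sigma> permutes UNIV. mat 1 - (perm_op \<sigma> :: ('v::finite, 'd::finite) oper))"
  using card_permutations_UNIV_pos[where 'v = 'v]
  by (simp add: symmetrizer_def sum_subtractf sum_constant_scaleR scaleR_diff_right del: sum_constant)
     (meson permutes_id)

section \<open>The left ideal generated by the local projectors\<close>

definition edge_set :: "('v \<Rightarrow> 'v \<Rightarrow> bool) \<Rightarrow> 'v set set" where
  "edge_set E = {{x, y} | x y. E x y}"

definition local_ideal :: "(complex ^ 'd) set \<Rightarrow> ('v \<Rightarrow> 'v \<Rightarrow> bool) \<Rightarrow> ('v::finite, 'd::finite) oper set" where
  "local_ideal S E = {(\<Sum>x\<in>UNIV. h1 x ** site_proj S x) + (\<Sum>e\<in>edge_set E. h2 e ** edge_proj e) | h1 h2. True}"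

lemma local_ideal_add:
  assumes "A \<in> local_ideal S E" and "B \<in> local_ideal S E"
  shows "A + B \<in> local_ideal S E"
proof -
  obtain a1 a2 b1 b2 where
    "A = (\<Sum>x\<in>UNIV. a1 x ** site_proj S x) + (\<Sum>e\<in>edge_set E. a2 e ** edge_proj e)" and
    "B = (\<Sum>x\<in>UNIV. b1 x ** site_proj S x) + (\<Sum>e\<in>edge_set E. b2 e ** edge_proj e)"
    using assms by (auto simp: local_ideal_def)
  then have "A + B = (\<Sum>x\<in>UNIV. (a1 x + b1 x) ** site_proj S x) + (\<Sum>e\<in>edge_set E. (a2 e + b2 e) ** edge_proj e)"
    by (simp add: matrix_add_rdistrib sum.distrib algebra_simps)
  then show ?thesis by (auto simp: local_ideal_def)
qed

lemma local_ideal_mult_left: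
  assumes "A \<in> local_ideal S E"
  shows "K ** A \<in> local_ideal S E"
proof -
  obtain a1 a2 where
    "A = (\<Sum>x\<in>UNIV. a1 x ** site_proj S x) + (\<Sum>e\<in>edge_set E. a2 e ** edge_proj e)"
    using assms by (auto simp: local_ideal_def)
  then have "K ** A = (\<Sum>x\<in>UNIV. (K ** a1 x) ** site_proj S x) + (\<Sum>e\<in>edge_set E. (K ** a2 e) ** edge_proj e)"
    by (simp add: matrix_add_ldistrib matrix_mul_sum matrix_mul_assoc)
  then show ?thesis by (auto simp: local_ideal_def)
qed

lemma local_ideal_scaleR: "A \<in> local_ideal S E \<Longrightarrow> r *\<^sub>R A \<in> local_ideal S E"
  using local_ideal_mult_left[of A S E "r *\<^sub>R mat 1"] by (simp add: scalar_matrix_assoc[symmetric])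

lemma zero_in_local_ideal: "0 \<in> local_ideal S E"
  unfolding local_ideal_def by (auto intro!: exI[of _ "\<lambda>_. 0"])

lemma local_ideal_sum: "(\<And>i. i \<in> I \<Longrightarrow> f i \<in> local_ideal S E) \<Longrightarrow> sum f I \<in> local_ideal S E"
  by (induct I rule: infinite_finite_induct) (auto intro: local_ideal_add zero_in_local_ideal)

lemma site_proj_in_local_ideal: "site_proj S x \<in> local_ideal S E"
proof -
  have "site_proj S x = (\<Sum>z\<in>UNIV. (if z = x then mat 1 else 0) ** site_proj S z)
      + (\<Sum>e\<in>edge_set E. 0 ** edge_proj e)"
    by (simp add: if_distrib[of "\<lambda>M. M ** _"] cong: if_cong)
  then show ?thesis unfolding local_ideal_def by (intro CollectI exI conjI TrueI)
qed

lemma edge_proj_in_local_ideal: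
  assumes "e \<in> edge_set E"
  shows "edge_proj e \<in> local_ideal S E"
proof -
  have "finite (edge_set E)" by (rule finite_subset[of _ UNIV]) auto
  then have "edge_proj e = (\<Sum>z\<in>UNIV. 0 ** site_proj S z)
      + (\<Sum>f\<in>edge_set E. (if f = e then mat 1 else 0) ** edge_proj f)"
    using assms by (simp add: if_distrib[of "\<lambda>M. M ** _"] cong: if_cong)
  then show ?thesis unfolding local_ideal_def by (intro CollectI exI conjI TrueI)
qed

lemma one_minus_perm_op_comp_in_local_ideal:
  assumes "mat 1 - perm_op \<sigma> \<in> local_ideal S E" and "mat 1 - perm_op \<rho> \<in> local_ideal S E"
  shows "mat 1 - perm_op (\<rho> \<circ> \<sigma>) \<in> local_ideal S E"
proof -
  have decomp: "mat 1 - perm_op (\<rho> \<circ> \<sigma>) = (mat 1 - perm_op \<sigma>) + perm_op \<sigma> ** (mat 1 - perm_op \<rho>)"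
    by (simp add: perm_op_mult[symmetric] matrix_diff_ldistrib)
  show ?thesis unfolding decomp by (intro local_ideal_add local_ideal_mult_left assms)
qed

lemma one_minus_transpose_in_local_ideal:
  fixes S :: "(complex ^ 'd::finite) set" and x y :: "'v::finite"
  assumes "E x y" and "x \<noteq> y"
  shows "mat 1 - perm_op (Transposition.transpose x y) \<in> local_ideal S E"
proof -
  have "mat 1 - perm_op (Transposition.transpose x y) = (2::real) *\<^sub>R (edge_proj {x, y} :: ('v, 'd) oper)"
    by (simp add: edge_proj_def pair_swap_doubleton[OF assms(2)] antisymmetrizer_def)
  moreover have "{x, y} \<in> edge_set E" using assms(1) by (auto simp: edge_set_def)
  ultimately show ?thesis by (simp add: local_ideal_scaleR edge_proj_in_local_ideal)
qed

lemma one_minus_transpose_in_local_ideal_rtranclp: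
  fixes S :: "(complex ^ 'd::finite) set" and a b :: "'v::finite"
  assumes path: "E\<^sup>*\<^sup>* a b" and irrefl: "\<And>x. \<not> E x x"
  shows "mat 1 - (perm_op (Transposition.transpose a b) :: ('v, 'd) oper) \<in> local_ideal S E"
  using path
proof (induction rule: rtranclp_induct)
  case base
  then show ?case by (simp add: perm_op_id[unfolded id_def] zero_in_local_ideal)
next
  case (step c b)
  have "c \<noteq> b" using step.hyps(2) irrefl by metis
  with step.hyps(2) have edge: "mat 1 - (perm_op (Transposition.transpose c b) :: ('v, 'd) oper) \<in> local_ideal S E"
    by (rule one_minus_transpose_in_local_ideal)
  show ?case
  proof (cases "a = c \<or> a = b")
    case True
    then show ?thesis using edge by (auto simp: perm_op_id[unfolded id_def] zero_in_local_ideal)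
  next
    case False
    then have transpose_decomp: "Transposition.transpose a b
        = Transposition.transpose c b \<circ> (Transposition.transpose a c \<circ> Transposition.transpose c b)"
      using \<open>c \<noteq> b\<close> by (auto simp: fun_eq_iff Transposition.transpose_def)
    show ?thesis unfolding transpose_decomp
      by (intro one_minus_perm_op_comp_in_local_ideal edge step.IH)
  qed
qed

lemma one_minus_perm_op_in_local_ideal:
  fixes S :: "(complex ^ 'd::finite) set"
  assumes connected: "\<And>x y. E\<^sup>*\<^sup>* x y" and irrefl: "\<And>x. \<not> E x x"
    and "(\<sigma> :: 'v::finite \<Rightarrow> 'v) permutes UNIV"
  shows "mat 1 - (perm_op \<sigma> :: ('v, 'd) oper) \<in> local_ideal S E"
  using assms(3) finite[of UNIV]
proof (induction rule: permutes_induct)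
  case id
  then show ?case by (simp add: perm_op_id[unfolded id_def] zero_in_local_ideal)
next
  case (swap a b p)
  then show ?case
    by (intro one_minus_perm_op_comp_in_local_ideal one_minus_transpose_in_local_ideal_rtranclp
        connected irrefl)
qed

lemma one_minus_on_sites_proj_in_local_ideal:
  "finite X \<Longrightarrow> mat 1 - on_sites X (proj_matrix S) \<in> local_ideal S E"
proof (induction X rule: finite_induct)
  case empty
  then show ?case by (simp add: on_sites_empty zero_in_local_ideal)
next
  case (insert x X)
  have decomp: "mat 1 - on_sites (insert x X) (proj_matrix S)
      = (mat 1 - on_sites X (proj_matrix S)) + on_sites X (proj_matrix S) ** site_proj S x"
    by (simp add: on_sites_insert[OF insert.hyps(2)] site_proj_def on_site_one_minus matrix_diff_ldistrib)
  show ?case unfolding decomp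
    by (intro insert.IH local_ideal_add local_ideal_mult_left site_proj_in_local_ideal)
qed

lemma one_minus_symmetrizer_in_local_ideal:
  assumes "\<And>x y. E\<^sup>*\<^sup>* x y" and "\<And>x. \<not> E x x"
  shows "mat 1 - symmetrizer \<in> local_ideal S E"
  unfolding one_minus_symmetrizer
  by (intro local_ideal_scaleR local_ideal_sum one_minus_perm_op_in_local_ideal assms) simp

section \<open>The projector onto the symmetric subspace\<close>

definition sym_proj :: "(complex ^ 'd) set \<Rightarrow> ('v::finite, 'd::finite) oper" where
  "sym_proj S = symmetrizer ** on_sites UNIV (proj_matrix S) ** symmetrizer"

lemma sym_proj_fixes:
  assumes S: "csubspace S" and v: "v \<in> Sym S"
  shows "sym_proj S *v v = v"
proof -
  have "symmetrizer *v v = v" using v by (intro symmetrizer_fixes) (simp add: Sym_def)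
  moreover have "on_sites UNIV (proj_matrix S) *v v = v"
    using v by (intro on_sites_proj_matrix_fixes[OF S]) (simp add: Sym_def)
  ultimately show ?thesis by (simp add: sym_proj_def matrix_vector_mul_assoc[symmetric])
qed

lemma sym_proj_in_Sym:
  assumes S: "csubspace S"
  shows "sym_proj S *v w \<in> Sym S"
proof -
  have "sym_proj S *v w = symmetrizer *v (on_sites UNIV (proj_matrix S) *v (symmetrizer *v w))"
    by (simp add: sym_proj_def matrix_vector_mul_assoc matrix_mul_assoc)
  then have "sym_proj S *v w \<in> tensor_sub S"
    by (simp add: symmetrizer_tensor_sub on_sites_proj_matrix_in_tensor_sub[OF S])
  moreover have "perm_op \<sigma> *v (sym_proj S *v w) = sym_proj S *v w" if "\<sigma> permutes UNIV" for \<sigma>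
    using that by (simp add: sym_proj_def matrix_vector_mul_assoc matrix_mul_assoc perm_op_mult_symmetrizer)
  ultimately show ?thesis by (simp add: Sym_def)
qed

lemma perm_op_mult_sym_proj: "\<sigma> permutes UNIV \<Longrightarrow> perm_op \<sigma> ** sym_proj S = sym_proj S"
  by (simp add: sym_proj_def matrix_mul_assoc perm_op_mult_symmetrizer)

lemma sym_proj_mult_perm_op: "\<sigma> permutes UNIV \<Longrightarrow> sym_proj S ** perm_op \<sigma> = sym_proj S"
  by (simp add: sym_proj_def matrix_mul_assoc[symmetric] symmetrizer_mult_perm_op)

lemma one_minus_sym_proj_in_local_ideal:
  assumes "\<And>x y. E\<^sup>*\<^sup>* x y" and "\<And>x. \<not> E x x"
  shows "mat 1 - sym_proj S \<in> local_ideal S E"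
proof -
  let ?P = "on_sites UNIV (proj_matrix S)"
  have decomp: "mat 1 - sym_proj S
      = (mat 1 - symmetrizer) + symmetrizer ** (mat 1 - ?P) + (symmetrizer ** ?P) ** (mat 1 - symmetrizer)"
    by (simp add: sym_proj_def matrix_diff_ldistrib matrix_mul_assoc)
  show ?thesis unfolding decomp
    by (intro local_ideal_add local_ideal_mult_left one_minus_symmetrizer_in_local_ideal
        one_minus_on_sites_proj_in_local_ideal assms) simp
qed

lemma totally_symmetric_sandwich:
  fixes P H :: "('v::finite, 'd::finite) oper"
  assumes "\<And>\<sigma>. \<sigma> permutes UNIV \<Longrightarrow> perm_op \<sigma> ** P = P"
    and "\<And>\<sigma>. \<sigma> permutes UNIV \<Longrightarrow> P ** perm_op \<sigma> = P"
  shows "totally_symmetric (P ** H ** P)"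
  unfolding totally_symmetric_def
proof (intro allI impI)
  fix \<sigma> :: "'v \<Rightarrow> 'v" assume \<sigma>: "\<sigma> permutes UNIV"
  have "perm_op \<sigma> ** (P ** H ** P) ** matrix_inv (perm_op \<sigma>)
      = (perm_op \<sigma> ** P) ** H ** (P ** perm_op (inv \<sigma>))"
    by (simp add: matrix_inv_perm_op[OF \<sigma>] matrix_mul_assoc)
  then show "perm_op \<sigma> ** (P ** H ** P) ** matrix_inv (perm_op \<sigma>) = P ** H ** P"
    by (simp add: assms \<sigma> permutes_inv[OF \<sigma>])
qed

lemma invariant_mult_sym_proj:
  fixes H :: "('v::finite, 'd::finite) oper"
  assumes S: "csubspace S" and invariant: "\<And>v. v \<in> Sym S \<Longrightarrow> H *v v \<in> Sym S"
  shows "H ** sym_proj S = sym_proj S ** H ** sym_proj S"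
proof -
  have "(H ** sym_proj S) *v w = (sym_proj S ** H ** sym_proj S) *v w" for w
    using sym_proj_fixes[OF S invariant[OF sym_proj_in_Sym[OF S]]]
    by (simp add: matrix_vector_mul_assoc[symmetric])
  then show ?thesis by (simp add: matrix_eq)
qed

lemma sym_proj_sandwich_on_Sym:
  fixes H :: "('v::finite, 'd::finite) oper"
  assumes S: "csubspace S" and invariant: "\<And>v. v \<in> Sym S \<Longrightarrow> H *v v \<in> Sym S"
    and v: "v \<in> Sym S"
  shows "(sym_proj S ** H ** sym_proj S) *v v = H *v v"
  using sym_proj_fixes[OF S v] sym_proj_fixes[OF S invariant[OF v]]
  by (simp add: matrix_vector_mul_assoc[symmetric])

lemma diff_sym_proj_sandwich_in_local_ideal:
  fixes H :: "('v::finite, 'd::finite) oper"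
  assumes "\<And>x y. E\<^sup>*\<^sup>* x y" and "\<And>x. \<not> E x x"
    and S: "csubspace S" and invariant: "\<And>v. v \<in> Sym S \<Longrightarrow> H *v v \<in> Sym S"
  shows "H - sym_proj S ** H ** sym_proj S \<in> local_ideal S E"
proof -
  have "H - sym_proj S ** H ** sym_proj S = H ** (mat 1 - sym_proj S)"
    using invariant_mult_sym_proj[OF S invariant] by (simp add: matrix_diff_ldistrib)
  then show ?thesis by (simp add: local_ideal_mult_left one_minus_sym_proj_in_local_ideal assms)
qed

theorem corollary5p1:
  fixes E :: "'v::finite \<Rightarrow> 'v \<Rightarrow> bool"
    and S :: "(complex ^ 'd::finite) set"
    and H :: "('v, 'd) oper"
  assumes E_sym: "\<And>x y. E x y \<Longrightarrow> E y x"
    and E_irrefl: "\<And>x. \<not> E x x"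
    and connected: "\<And>x y. E\<^sup>*\<^sup>* x y"
    and S_sub: "csubspace S"
    and invariant: "\<And>v. v \<in> Sym S \<Longrightarrow> H *v v \<in> (Sym S :: ('v, 'd) state set)"
  shows "\<exists>HA HZ. H = HA + HZ \<and> totally_symmetric HZ \<and> annihilates HA (Sym S)
     \<and> (\<exists>(h1 :: 'v \<Rightarrow> ('v, 'd) oper) (P1 :: 'v \<Rightarrow> ('v, 'd) oper)
          (h2 :: 'v set \<Rightarrow> ('v, 'd) oper) (P2 :: 'v set \<Rightarrow> ('v, 'd) oper).
          (\<forall>x. orth_proj (P1 x) \<and> acts_only_on {x} (P1 x) \<and> annihilates (P1 x) (Sym S))
        \<and> (\<forall>x y. E x y \<longrightarrow> orth_proj (P2 {x, y}) \<and> acts_only_on {x, y} (P2 {x, y})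
                         \<and> annihilates (P2 {x, y}) (Sym S))
        \<and> HA = (\<Sum>x\<in>UNIV. h1 x ** P1 x)
               + (\<Sum>e\<in>{{x, y} | x y. E x y}. h2 e ** P2 e))
     \<and> (\<forall>v \<in> Sym S. \<forall>\<mu>::complex. v \<noteq> 0 \<longrightarrow> HZ *v v = \<mu> *s v \<longrightarrow> H *v v = \<mu> *s v)"
proof -
  define HZ where "HZ = sym_proj S ** H ** sym_proj S"
  have HZ_on_Sym: "HZ *v v = H *v v" if "v \<in> Sym S" for v
    unfolding HZ_def using S_sub invariant that by (rule sym_proj_sandwich_on_Sym)
  obtain h1 h2 where
    HA_decomp: "H - HZ = (\<Sum>x\<in>UNIV. h1 x ** site_proj S x) + (\<Sum>e\<in>edge_set E. h2 e ** edge_proj e)"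
    using diff_sym_proj_sandwich_in_local_ideal[OF connected E_irrefl S_sub invariant]
    by (auto simp: HZ_def local_ideal_def)
  have "totally_symmetric HZ"
    unfolding HZ_def by (intro totally_symmetric_sandwich perm_op_mult_sym_proj sym_proj_mult_perm_op)
  moreover have "annihilates (H - HZ) (Sym S)"
    using HZ_on_Sym by (simp add: annihilates_def matrix_vector_mult_diff_rdistrib)
  moreover have "orth_proj (edge_proj {x, y}) \<and> acts_only_on {x, y} (edge_proj {x, y})
      \<and> annihilates (edge_proj {x, y}) (Sym S)" if "E x y" for x y
    using that E_irrefl by (metis edge_proj_properties)
  moreover have "H = (H - HZ) + HZ" by simp
  moreover have "\<forall>v\<in>Sym S. \<forall>\<mu>. v \<noteq> 0 \<longrightarrow> HZ *v v = \<mu> *s v \<longrightarrow> H *v v = \<mu> *s v"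
    using HZ_on_Sym by simp
  ultimately show ?thesis
    using site_proj_properties[OF S_sub] HA_decomp[unfolded edge_set_def] by blast
qed

end
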